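(* Let $k\ge1$ and $m\ge1$ be integers. Consider all $k$-Dyck paths with exactly $m+1$ up-steps. For each such path, let $r(P)$ be the number of down-steps in the maximal run of down-steps immediately following its first up-step (so $0\le r(P)\le k$). Then $$\sum_{P} r(P)=\frac{k}{m+1}\binom{(k+1)m}{m}.$$
   Context: A $k$-Dyck path is a lattice path from $(0,0)$ to a point on the $x$-axis using up-steps $(1,k)$ and down-steps $(1,-1)$ that never goes below the $x$-axis. *)

theory Defs
  imports Complex_Main
begin

text \<open>A lattice path is encoded as a list of steps: True = up-step (1,k),
  False = down-step (1,-1).\<close>

definition step_height :: "nat \<Rightarrow> bool \<Rightarrow> int" where
  "step_height k s = (if s then int k else -1)"

definition path_height :: "nat \<Rightarrow> bool list \<Rightarrow> int" where
  "path_height k P = sum_list (map (step_height k) P)"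

definition is_kDyck :: "nat \<Rightarrow> bool list \<Rightarrow> bool" where
  "is_kDyck k P \<longleftrightarrow> (\<forall>i \<le> length P. path_height k (take i P) \<ge> 0) \<and> path_height k P = 0"

definition num_up :: "bool list \<Rightarrow> nat" where
  "num_up P = length (filter (\<lambda>s. s) P)"

definition first_run :: "bool list \<Rightarrow> nat" where
  "first_run P = length (takeWhile (\<lambda>s. \<not> s) (tl (dropWhile (\<lambda>s. \<not> s) P)))"

end

theory Submission
  imports Defs
begin

text \<open>Deleting the first up-step turns the paths in question into the lattice paths from
  height \<open>k\<close> down to \<open>0\<close> with \<open>m\<close> up-steps, and \<open>r(P)\<close> into their number of leading
  down-steps. Let \<open>B(a, n)\<close> count the paths from height \<open>a\<close> to \<open>0\<close> with \<open>n\<close> up-steps that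
  stay nonnegative. Splitting off the first step shows that the leading down-steps of the
  paths from height \<open>a\<close> add up to \<open>\<Sum>b<a. B(b, n)\<close>, and that
  \<open>B(a + 1, n + 1) = B(a + 1 + k, n) + B(a, n + 1)\<close>, whence the ballot-type formula
  \<open>B(a, n + 1) = C(N, n + 1) - k C(N, n)\<close> with \<open>N = a + (k + 1)(n + 1)\<close>. The hockey-stick
  identity sums this over \<open>b < k\<close> to \<open>k C(L, m) - C(L, m + 1)\<close> with \<open>L = (k + 1) m\<close>,
  which equals \<open>k/(m + 1) C(L, m)\<close>.\<close>

fun kDyck_from :: "nat \<Rightarrow> nat \<Rightarrow> bool list \<Rightarrow> bool" where
  "kDyck_from k h [] \<longleftrightarrow> h = 0"
| "kDyck_from k h (s # P) \<longleftrightarrow>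
     (if s then kDyck_from k (h + k) P else h \<ge> 1 \<and> kDyck_from k (h - 1) P)"

lemma kDyck_from_iff:
  "kDyck_from k h P \<longleftrightarrow>
     (\<forall>i\<le>length P. int h + path_height k (take i P) \<ge> 0) \<and> int h + path_height k P = 0"
proof (induction P arbitrary: h)
  case Nil
  then show ?case by (simp add: path_height_def)
next
  case (Cons s P)
  have all_le_Suc: "(\<forall>i\<le>Suc n. Q i) \<longleftrightarrow> Q 0 \<and> (\<forall>i\<le>n. Q (Suc i))"
    for n and Q :: "nat \<Rightarrow> bool"
    by (metis Suc_le_mono le0 not0_implies_Suc)
  show ?case
  proof (cases "s \<or> h \<ge> 1")
    case True
    then show ?thesis
      using Cons.IH[of "h + k"] Cons.IH[of "h - 1"]
      by (simp only: length_Cons all_le_Suc)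
         (auto simp: step_height_def path_height_def algebra_simps)
  next
    case False
    then show ?thesis
      by (simp only: length_Cons all_le_Suc) (fastforce simp: step_height_def path_height_def)
  qed
qed

lemma is_kDyck_iff_kDyck_from: "is_kDyck k P \<longleftrightarrow> kDyck_from k 0 P"
  by (simp add: is_kDyck_def kDyck_from_iff)

lemma num_up_Cons [simp]: "num_up (s # P) = (if s then Suc (num_up P) else num_up P)"
  by (simp add: num_up_def)

lemma length_kDyck_from: "kDyck_from k h P \<Longrightarrow> length P = h + (k + 1) * num_up P"
  by (induction P arbitrary: h) (auto simp: num_up_def split: if_splits)

definition kDyck_paths :: "nat \<Rightarrow> nat \<Rightarrow> nat \<Rightarrow> bool list set" where
  "kDyck_paths k a n = {P. kDyck_from k a P \<and> num_up P = n}"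

lemma finite_kDyck_paths [simp]: "finite (kDyck_paths k a n)"
proof (rule finite_subset)
  show "kDyck_paths k a n \<subseteq> {P. length P = a + (k + 1) * n}"
    by (auto simp: kDyck_paths_def length_kDyck_from)
qed (rule finite_list_length)

lemma kDyck_paths_0:
  "kDyck_paths k 0 n = (if n = 0 then {[]} else (#) True ` kDyck_paths k k (n - 1))"
  (is "?L = ?R")
proof (rule set_eqI)
  fix P
  show "P \<in> ?L \<longleftrightarrow> P \<in> ?R"
    by (cases P) (auto simp: kDyck_paths_def num_up_def)
qed

lemma kDyck_paths_Suc:
  "kDyck_paths k (Suc a) n =
     (if n = 0 then {} else (#) True ` kDyck_paths k (Suc a + k) (n - 1))
     \<union> (#) False ` kDyck_paths k a n" (is "?L = ?R")
proof (rule set_eqI)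
  fix P
  show "P \<in> ?L \<longleftrightarrow> P \<in> ?R"
    by (cases P) (auto simp: kDyck_paths_def num_up_def)
qed

lemma card_kDyck_paths_0: "card (kDyck_paths k a 0) = 1"
  by (induction a) (simp_all add: kDyck_paths_0 kDyck_paths_Suc card_image)

lemma card_kDyck_paths_Suc:
  "card (kDyck_paths k (Suc a) n) =
     (if n = 0 then 0 else card (kDyck_paths k (Suc a + k) (n - 1))) + card (kDyck_paths k a n)"
  unfolding kDyck_paths_Suc by (subst card_Un_disjoint) (auto simp: card_image)

lemma choose_absorb_comp: "Suc j * (x choose Suc j) = (x - j) * (x choose j)"
  using binomial_absorption[of j x] binomial_absorb_comp[of x j] by simp

lemma choose_Suc_eq_mult_choose: "(k * Suc n + n) choose Suc n = k * ((k * Suc n + n) choose n)"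
proof -
  have "Suc n * ((k * Suc n + n) choose Suc n) = k * Suc n * ((k * Suc n + n) choose n)"
    using choose_absorb_comp[of n "k * Suc n + n"] by simp
  also have "\<dots> = Suc n * (k * ((k * Suc n + n) choose n))"
    by (simp only: ac_simps)
  finally show ?thesis
    by (simp only: mult_cancel1) simp
qed

lemma card_kDyck_paths_Suc_eq:
  "int (card (kDyck_paths k a (Suc n)))
     = int ((a + (k + 1) * Suc n) choose Suc n) - int k * int ((a + (k + 1) * Suc n) choose n)"
proof (induction n arbitrary: a)
  case 0
  show ?case
    by (induction a) (simp_all add: kDyck_paths_0 card_kDyck_paths_Suc card_image card_kDyck_paths_0)
next
  case (Suc n)
  note outer_IH = Suc.IH
  show ?case
  proof (induction a)
    case 0
    define M where "M = k * Suc (Suc n) + Suc n"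
    have "card (kDyck_paths k 0 (Suc (Suc n))) = card (kDyck_paths k k (Suc n))"
      by (simp add: kDyck_paths_0 card_image)
    moreover have "k + (k + 1) * Suc n = M" "(k + 1) * Suc (Suc n) = Suc M"
      by (simp_all add: M_def algebra_simps)
    moreover have "M choose Suc (Suc n) = k * (M choose Suc n)"
      unfolding M_def by (rule choose_Suc_eq_mult_choose)
    ultimately show ?case
      using outer_IH[of k] by (simp add: algebra_simps)
  next
    case (Suc a)
    then show ?case
      using Suc.IH outer_IH[of "Suc a + k"] by (simp add: card_kDyck_paths_Suc algebra_simps)
  qed
qed

lemma sum_leading_downs_kDyck_paths:
  "(\<Sum>P\<in>kDyck_paths k a n. length (takeWhile (\<lambda>s. \<not> s) P))
     = (\<Sum>b<a. card (kDyck_paths k b n))"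
proof (induction a)
  case 0
  show ?case
    by (simp add: kDyck_paths_0 sum.reindex)
next
  case (Suc a)
  let ?downs = "\<lambda>P. length (takeWhile (\<lambda>s. \<not> s) P)"
  have "(\<Sum>P\<in>kDyck_paths k (Suc a) n. ?downs P) = (\<Sum>P\<in>(#) False ` kDyck_paths k a n. ?downs P)"
    unfolding kDyck_paths_Suc by (subst sum.union_disjoint) (auto simp: sum.reindex)
  also have "\<dots> = (\<Sum>P\<in>kDyck_paths k a n. 1 + ?downs P)"
    by (simp add: sum.reindex)
  also have "\<dots> = card (kDyck_paths k a n) + (\<Sum>P\<in>kDyck_paths k a n. ?downs P)"
    by (simp only: sum.distrib) simp
  finally show ?case
    using Suc.IH by simp
qed

lemma sum_choose_upper_from: "(\<Sum>b<t. (L + b) choose j) + (L choose Suc j) = (L + t) choose Suc j"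
  by (induction t) simp_all

lemma sum_card_kDyck_paths_below:
  assumes "m \<ge> 1"
  shows "(m + 1) * (\<Sum>b<k. card (kDyck_paths k b m)) = k * (((k + 1) * m) choose m)"
proof -
  define L where "L = (k + 1) * m"
  obtain j where m: "m = Suc j"
    using assms by (cases m) auto
  have hockey_stick:
    "(\<Sum>b<k. int ((L + b) choose i)) = int ((L + k) choose Suc i) - int (L choose Suc i)" for i
    using sum_choose_upper_from[where t = k and L = L and j = i]
    by (simp add: eq_diff_eq flip: of_nat_sum of_nat_add)
  have "int (\<Sum>b<k. card (kDyck_paths k b m))
      = (\<Sum>b<k. int ((L + b) choose m)) - int k * (\<Sum>b<k. int ((L + b) choose j))"
    using card_kDyck_paths_Suc_eq[of k _ j]
    by (simp add: m L_def of_nat_sum sum_subtractf sum_distrib_left add.commute)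
  also have "\<dots> = int ((L + k) choose Suc m) - int (L choose Suc m)
      - int k * (int ((L + k) choose m) - int (L choose m))"
    using hockey_stick[of m] hockey_stick[of j] by (simp add: m)
  also have "\<dots> = int k * int (L choose m) - int (L choose Suc m)"
    using choose_Suc_eq_mult_choose[of k m] by (simp add: L_def algebra_simps)
  finally have sum_eq:
    "int (\<Sum>b<k. card (kDyck_paths k b m)) = int k * int (L choose m) - int (L choose Suc m)" .
  have "Suc m * (L choose Suc m) = k * m * (L choose m)"
    using choose_absorb_comp[of m L] by (simp add: L_def)
  then have "int (m + 1) * int (\<Sum>b<k. card (kDyck_paths k b m)) = int (k * (L choose m))"
    unfolding sum_eq by (simp add: algebra_simps flip: of_nat_mult)
  then show ?thesis
    by (simp only: L_def flip: of_nat_mult of_nat_eq_iff)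
qed

theorem mainTheorem6:
  fixes k m :: nat
  assumes "k \<ge> 1" and "m \<ge> 1"
  shows "real (\<Sum>P \<in> {P. is_kDyck k P \<and> num_up P = m + 1}. first_run P)
           = real k / real (m + 1) * real (((k + 1) * m) choose m)"
proof -
  have paths: "{P. is_kDyck k P \<and> num_up P = m + 1} = (#) True ` kDyck_paths k k m"
    using kDyck_paths_0[of k "m + 1"] by (simp add: kDyck_paths_def is_kDyck_iff_kDyck_from)
  have "(\<Sum>P \<in> {P. is_kDyck k P \<and> num_up P = m + 1}. first_run P)
      = (\<Sum>b<k. card (kDyck_paths k b m))"
    unfolding paths by (simp add: sum.reindex first_run_def sum_leading_downs_kDyck_paths)
  moreover have "real (m + 1) * real (\<Sum>b<k. card (kDyck_paths k b m))
      = real k * real (((k + 1) * m) choose m)"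
    using sum_card_kDyck_paths_below[OF assms(2), of k] by (simp only: flip: of_nat_mult)
  ultimately show ?thesis
    by (simp add: field_simps)
qed

end
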